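(* Let $r,s,t,a,b,c$ be real numbers with $t\neq0$, and let $M_{H,n}^{(3)}$, $M_{h,n}^{(3)}$ be the matrix sequences defined in the context. Then for all nonnegative integers $m,n$: $$M_{h,m}^{(3)}M_{H,n+1}^{(3)}=M_{H,n+1}^{(3)}M_{h,m}^{(3)}=M_{H,m+n+1}^{(3)},\qquad \big(M_{H,n+1}^{(3)}\big)^{m}=\big(M_{H,1}^{(3)}\big)^{m}M_{h,mn}^{(3)}.$$
   Context: The third-order Horadam matrix sequence is the sequence of $3\times3$ matrices defined by $M_{H,n+3}^{(3)}=rM_{H,n+2}^{(3)}+sM_{H,n+1}^{(3)}+tM_{H,n}^{(3)}$ ($n\ge0$) with $M_{H,0}^{(3)}=\begin{pmatrix} b & c-rb & ta\\ a & b-ra & c-rb-sa\\ \frac{1}{t}(c-rb-sa) & a-\frac{r}{t}(c-rb-sa) & \frac1t\big(-sc+(t+rs)b+(s^2-rt)a\big)\end{pmatrix}$, $M_{H,1}^{(3)}=\begin{pmatrix} c & sb+ta & tb\\ b & c-rb & ta\\ a & b-ra & c-rb-sa\end{pmatrix}$, $M_{H,2}^{(3)}=\begin{pmatrix} rc+sb+ta & sc+tb & tc\\ c & sb+ta & tb\\ b & c-rb & ta\end{pmatrix}$. The generalized Tribonacci matrix sequence satisfies the same recurrence with $M_{h,0}^{(3)}=I_3$, $M_{h,1}^{(3)}=\begin{pmatrix} r&s&t\\1&0&0\\0&1&0\end{pmatrix}$, $M_{h,2}^{(3)}=\begin{pmatrix} r^2+s&rs+t&rt\\ r&s&t\\ 1&0&0\end{pmatrix}$.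 *)

theory Defs
  imports "HOL-Analysis.Analysis"
begin

definition mat3 :: "real list \<Rightarrow> real list \<Rightarrow> real list \<Rightarrow> real^3^3" where
  "mat3 r1 r2 r3 = vector [vector r1, vector r2, vector r3]"

fun matpow :: "real^3^3 \<Rightarrow> nat \<Rightarrow> real^3^3" where
  "matpow A 0 = mat 1"
| "matpow A (Suc k) = matpow A k ** A"

fun MH :: "real \<Rightarrow> real \<Rightarrow> real \<Rightarrow> real \<Rightarrow> real \<Rightarrow> real \<Rightarrow> nat \<Rightarrow> real^3^3" where
  "MH r s t a b c 0 = mat3
      [b, c - r*b, t*a]
      [a, b - r*a, c - r*b - s*a]
      [(1/t)*(c - r*b - s*a), a - (r/t)*(c - r*b - s*a),
       (1/t)*(- (s * c) + (t + r * s)*b + (s^2 - r*t)*a)]"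
| "MH r s t a b c (Suc 0) = mat3
      [c, s*b + t*a, t*b]
      [b, c - r*b, t*a]
      [a, b - r*a, c - r*b - s*a]"
| "MH r s t a b c (Suc (Suc 0)) = mat3
      [r*c + s*b + t*a, s*c + t*b, t*c]
      [c, s*b + t*a, t*b]
      [b, c - r*b, t*a]"
| "MH r s t a b c (Suc (Suc (Suc n))) =
      r *\<^sub>R MH r s t a b c (Suc (Suc n)) + s *\<^sub>R MH r s t a b c (Suc n)
      + t *\<^sub>R MH r s t a b c n"

fun Mh :: "real \<Rightarrow> real \<Rightarrow> real \<Rightarrow> nat \<Rightarrow> real^3^3" where
  "Mh r s t 0 = mat 1"
| "Mh r s t (Suc 0) = mat3 [r, s, t] [1, 0, 0] [0, 1, 0]"
| "Mh r s t (Suc (Suc 0)) = mat3 [r^2 + s, r* s + t, r*t] [r, s, t] [1, 0, 0]"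
| "Mh r s t (Suc (Suc (Suc n))) =
      r *\<^sub>R Mh r s t (Suc (Suc n)) + s *\<^sub>R Mh r s t (Suc n) + t *\<^sub>R Mh r s t n"

end

theory Submission
  imports Defs
begin

text \<open>Let A = M_{h,1}, the companion matrix of x^3 - r x^2 - s x - t. Since
  A^3 = r A^2 + s A + t I, the powers A^n satisfy the Tribonacci recurrence, and so do the
  products M_{H,0} A^n. A third-order recurrence is determined by its first three terms,
  hence M_{h,n} = A^n and M_{H,n} = M_{H,0} A^n. Because M_{H,0} commutes with A, all
  claimed identities reduce to the laws of exponents for A.\<close>

lemma matpow_add: "matpow A (m + n) = matpow A m ** matpow A n"
  by (induction n) (simp_all add: matrix_mul_assoc)

lemma matpow_mult: "matpow (matpow A n) m = matpow A (m * n)"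
  by (induction m) (simp_all add: matpow_add[symmetric] add.commute)

lemma matpow_commute: "matpow A j ** matpow A k = matpow A k ** matpow A j"
  by (metis matpow_add add.commute)

lemma matpow_commute_right: "A ** B = B ** A \<Longrightarrow> matpow A n ** B = B ** matpow A n"
  by (induction n) (simp_all, metis matrix_mul_assoc)

lemma matpow_mult_distrib_commute:
  assumes "A ** B = B ** A"
  shows "matpow (A ** B) n = matpow A n ** matpow B n"
proof (induction n)
  case (Suc n)
  have "matpow (A ** B) (Suc n) = matpow A n ** (matpow B n ** A) ** B"
    using Suc by (simp add: matrix_mul_assoc)
  also have "\<dots> = matpow A n ** (A ** matpow B n) ** B"
    using matpow_commute_right[OF assms[symmetric]] by simp
  also have "\<dots> = matpow A (Suc n) ** matpow B (Suc n)"
    by (simp add: matrix_mul_assoc)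
  finally show ?case .
qed simp

definition tribonacci_rec :: "real \<Rightarrow> real \<Rightarrow> real \<Rightarrow> (nat \<Rightarrow> 'a::real_vector) \<Rightarrow> bool" where
  "tribonacci_rec r s t f \<longleftrightarrow>
     (\<forall>n. f (Suc (Suc (Suc n))) = r *\<^sub>R f (Suc (Suc n)) + s *\<^sub>R f (Suc n) + t *\<^sub>R f n)"

lemma tribonacci_rec_unique:
  assumes "tribonacci_rec r s t f" "tribonacci_rec r s t g"
    and "f 0 = g 0" "f 1 = g 1" "f 2 = g 2"
  shows "f n = g n"
proof -
  have "f n = g n \<and> f (Suc n) = g (Suc n) \<and> f (Suc (Suc n)) = g (Suc (Suc n))"
    by (induction n) (use assms in \<open>simp_all add: tribonacci_rec_def numeral_2_eq_2\<close>)
  then show ?thesis by blast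
qed

lemma tribonacci_rec_mult_left:
  fixes X :: "'a::real_algebra_1^'n^'m" and f :: "nat \<Rightarrow> 'a^'k^'n"
  shows "tribonacci_rec r s t f \<Longrightarrow> tribonacci_rec r s t (\<lambda>n. X ** f n)"
  by (simp add: tribonacci_rec_def matrix_add_ldistrib matrix_scalar_ac scalar_matrix_assoc)

lemma tribonacci_rec_matpow:
  assumes "matpow A 3 = r *\<^sub>R matpow A 2 + s *\<^sub>R A + t *\<^sub>R mat 1"
  shows "tribonacci_rec r s t (matpow A)"
proof -
  have "matpow A (n + 3) = r *\<^sub>R matpow A (n + 2) + s *\<^sub>R matpow A (n + 1) + t *\<^sub>R matpow A n"
    for n
  proof -
    have "matpow A (n + 3) = matpow A n ** (r *\<^sub>R matpow A 2 + s *\<^sub>R A + t *\<^sub>R mat 1)"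
      by (simp only: matpow_add assms)
    also have "\<dots> = r *\<^sub>R (matpow A n ** matpow A 2) + s *\<^sub>R (matpow A n ** A) + t *\<^sub>R matpow A n"
      by (simp add: matrix_add_ldistrib matrix_scalar_ac scalar_matrix_assoc)
    finally show ?thesis
      by (simp add: numeral_2_eq_2 matrix_mul_assoc)
  qed
  then show ?thesis
    by (simp add: tribonacci_rec_def numeral_3_eq_3 numeral_2_eq_2)
qed

lemma mat3_eq_iff:
  "mat3 [a1,a2,a3] [a4,a5,a6] [a7,a8,a9] = mat3 [b1,b2,b3] [b4,b5,b6] [b7,b8,b9] \<longleftrightarrow>
   a1=b1 \<and> a2=b2 \<and> a3=b3 \<and> a4=b4 \<and> a5=b5 \<and> a6=b6 \<and> a7=b7 \<and> a8=b8 \<and> a9=b9"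
  by (auto simp: mat3_def vec_eq_iff forall_3 vector_3)

lemma mat3_mult:
  "mat3 [a1,a2,a3] [a4,a5,a6] [a7,a8,a9] ** mat3 [b1,b2,b3] [b4,b5,b6] [b7,b8,b9] =
   mat3 [a1*b1+a2*b4+a3*b7, a1*b2+a2*b5+a3*b8, a1*b3+a2*b6+a3*b9]
        [a4*b1+a5*b4+a6*b7, a4*b2+a5*b5+a6*b8, a4*b3+a5*b6+a6*b9]
        [a7*b1+a8*b4+a9*b7, a7*b2+a8*b5+a9*b8, a7*b3+a8*b6+a9*b9]"
  by (simp add: mat3_def vec_eq_iff forall_3 vector_3 matrix_matrix_mult_def sum_3)

lemma mat3_scaleR:
  "x *\<^sub>R mat3 [a1,a2,a3] [a4,a5,a6] [a7,a8,a9] =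
   mat3 [x*a1, x*a2, x*a3] [x*a4, x*a5, x*a6] [x*a7, x*a8, x*a9]"
  by (simp add: mat3_def vec_eq_iff forall_3 vector_3)

lemma mat3_add:
  "mat3 [a1,a2,a3] [a4,a5,a6] [a7,a8,a9] + mat3 [b1,b2,b3] [b4,b5,b6] [b7,b8,b9] =
   mat3 [a1+b1, a2+b2, a3+b3] [a4+b4, a5+b5, a6+b6] [a7+b7, a8+b8, a9+b9]"
  by (simp add: mat3_def vec_eq_iff forall_3 vector_3)

lemma mat3_one: "(mat 1 :: real^3^3) = mat3 [1,0,0] [0,1,0] [0,0,1]"
  by (simp add: mat3_def vec_eq_iff forall_3 vector_3 mat_def)

lemma Mh_1_cube:
  "matpow (Mh r s t 1) 3 = r *\<^sub>R matpow (Mh r s t 1) 2 + s *\<^sub>R Mh r s t 1 + t *\<^sub>R mat 1"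
  by (simp add: numeral_eq_Suc mat3_one mat3_mult mat3_scaleR mat3_add mat3_eq_iff
      algebra_simps power2_eq_square)

lemma Mh_eq_matpow: "Mh r s t n = matpow (Mh r s t 1) n"
proof (rule tribonacci_rec_unique[of r s t])
  show "tribonacci_rec r s t (Mh r s t)"
    by (simp add: tribonacci_rec_def)
  show "tribonacci_rec r s t (matpow (Mh r s t 1))"
    by (rule tribonacci_rec_matpow[OF Mh_1_cube])
qed (simp_all add: numeral_2_eq_2 mat3_one mat3_mult mat3_eq_iff power2_eq_square)

lemma MH_eq_MH0_mult_matpow:
  assumes "t \<noteq> 0"
  shows "MH r s t a b c n = MH r s t a b c 0 ** matpow (Mh r s t 1) n"
proof (rule tribonacci_rec_unique[of r s t])
  show "tribonacci_rec r s t (MH r s t a b c)"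
    by (simp add: tribonacci_rec_def)
  show "tribonacci_rec r s t (\<lambda>n. MH r s t a b c 0 ** matpow (Mh r s t 1) n)"
    by (rule tribonacci_rec_mult_left[OF tribonacci_rec_matpow[OF Mh_1_cube]])
qed (use assms in \<open>simp_all add: numeral_2_eq_2 mat3_one mat3_mult mat3_eq_iff
      field_simps power2_eq_square\<close>)

lemma MH0_commute_Mh1:
  assumes "t \<noteq> 0"
  shows "MH r s t a b c 0 ** Mh r s t 1 = Mh r s t 1 ** MH r s t a b c 0"
  using assms by (simp add: mat3_mult mat3_eq_iff field_simps power2_eq_square)

theorem theorem3p3:
  fixes r s t a b c :: real and m n :: nat
  assumes "t \<noteq> 0"
  shows "Mh r s t m ** MH r s t a b c (n+1) = MH r s t a b c (n+1) ** Mh r s t m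
       \<and> MH r s t a b c (n+1) ** Mh r s t m = MH r s t a b c (m+n+1)
       \<and> matpow (MH r s t a b c (n+1)) m = matpow (MH r s t a b c 1) m ** Mh r s t (m*n)"
proof -
  define A where "A = Mh r s t 1"
  define M0 where "M0 = MH r s t a b c 0"
  have MH: "MH r s t a b c k = M0 ** matpow A k" for k
    unfolding A_def M0_def by (rule MH_eq_MH0_mult_matpow[OF assms])
  have Mh: "Mh r s t k = matpow A k" for k
    unfolding A_def by (rule Mh_eq_matpow)
  have M0_commute: "M0 ** matpow A k = matpow A k ** M0" for k
    using matpow_commute_right[OF MH0_commute_Mh1[OF assms, symmetric]]
    unfolding A_def M0_def by metis
  have MH_Suc: "MH r s t a b c (n+1) = MH r s t a b c 1 ** matpow A n"
    unfolding MH by (metis matpow_add matrix_mul_assoc add.commute)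
  have MH1_commute: "MH r s t a b c 1 ** matpow A n = matpow A n ** MH r s t a b c 1"
    unfolding MH by (metis M0_commute matpow_commute matrix_mul_assoc)
  have "Mh r s t m ** MH r s t a b c (n+1) = MH r s t a b c (n+1) ** Mh r s t m"
    unfolding MH Mh by (metis M0_commute matpow_commute matrix_mul_assoc)
  moreover have "MH r s t a b c (n+1) ** Mh r s t m = MH r s t a b c (m+n+1)"
    unfolding MH Mh by (metis matpow_add matrix_mul_assoc add.commute add.assoc)
  moreover have "matpow (MH r s t a b c (n+1)) m = matpow (MH r s t a b c 1) m ** Mh r s t (m*n)"
    unfolding MH_Suc Mh matpow_mult_distrib_commute[OF MH1_commute] matpow_mult ..
  ultimately show ?thesis by blast
qed

end
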